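(* Let $S$ be a set of patterns such that either no $\pi\in S$ begins with $1$, or no $\pi\in S$ begins with its largest element. Let $f_n(S)$ and $t_n(S)$ denote the number of rooted labeled forests and rooted labeled trees on $[n]$ avoiding $S$. Then $\lim_{n\to\infty}\frac{f_n(S)^{1/n}}{n}$ and $\lim_{n\to\infty}\frac{t_n(S)^{1/n}}{n}$ exist and are equal.
   Context: A rooted labeled forest on $[n]$ is an unordered forest on $n$ vertices, each component with a distinguished root, with distinct labels from $[n]$; a rooted labeled tree is a connected one. A pattern of length $k$ is a permutation $\pi$ of $[k]$; it begins with its largest element if $\pi(1)=k$. An instance of $\pi$ is a sequence of vertices $v_1,\dots,v_k$ with $v_i$ a strict ancestor of $v_{i+1}$ whose labels are in the same relative order as $\pi$; a forest avoids $S$ if it contains no instance of any pattern in $S$. *)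

theory Defs
  imports Complex_Main
begin

text \<open>A rooted labeled forest on [n] = {1..n} is encoded by its parent map
  par :: nat \<Rightarrow> nat option: roots have parent None, every vertex outside [n]
  has parent None, parents lie in [n], and the parent relation is acyclic.\<close>

definition parent_rel :: "(nat \<Rightarrow> nat option) \<Rightarrow> (nat \<times> nat) set" where
  "parent_rel par = {(v, u). par v = Some u}"

definition is_forest :: "nat \<Rightarrow> (nat \<Rightarrow> nat option) \<Rightarrow> bool" where
  "is_forest n par \<longleftrightarrow>
     (\<forall>v. v \<notin> {1..n} \<longrightarrow> par v = None) \<and>
     (\<forall>v u. par v = Some u \<longrightarrow> u \<in> {1..n}) \<and>
     acyclic (parent_rel par)"

definition is_tree :: "nat \<Rightarrow> (nat \<Rightarrow> nat option) \<Rightarrow> bool" where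
  "is_tree n par \<longleftrightarrow> is_forest n par \<and> card {v \<in> {1..n}. par v = None} = 1"

definition strict_anc :: "(nat \<Rightarrow> nat option) \<Rightarrow> nat \<Rightarrow> nat \<Rightarrow> bool" where
  "strict_anc par u v \<longleftrightarrow> (v, u) \<in> (parent_rel par)\<^sup>+"

text \<open>A pattern of length k is a permutation of [k], given as the list [pi(1),...,pi(k)].\<close>
definition is_pattern :: "nat list \<Rightarrow> bool" where
  "is_pattern pat \<longleftrightarrow> length pat \<ge> 1 \<and> distinct pat \<and> set pat = {1..length pat}"

definition is_instance :: "nat \<Rightarrow> (nat \<Rightarrow> nat option) \<Rightarrow> nat list \<Rightarrow> nat list \<Rightarrow> bool" where
  "is_instance n par pat vs \<longleftrightarrow>
     length vs = length pat \<and> set vs \<subseteq> {1..n} \<and>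
     (\<forall>i. i + 1 < length vs \<longrightarrow> strict_anc par (vs ! i) (vs ! (i + 1))) \<and>
     (\<forall>i j. i < length vs \<longrightarrow> j < length vs \<longrightarrow> (vs ! i < vs ! j \<longleftrightarrow> pat ! i < pat ! j))"

definition avoids :: "nat \<Rightarrow> (nat \<Rightarrow> nat option) \<Rightarrow> nat list set \<Rightarrow> bool" where
  "avoids n par S \<longleftrightarrow> (\<forall>pat \<in> S. \<forall>vs. \<not> is_instance n par pat vs)"

definition f_count :: "nat list set \<Rightarrow> nat \<Rightarrow> nat" where
  "f_count S n = card {par. is_forest n par \<and> avoids n par S}"

definition t_count :: "nat list set \<Rightarrow> nat \<Rightarrow> nat" where
  "t_count S n = card {par. is_tree n par \<and> avoids n par S}"

end

theory Submission
  imports Defs "HOL-Library.FuncSet" "HOL-Real_Asymp.Real_Asymp"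
begin

(* Write a_n = f_n(S). Take as root r the smallest label if no pattern of S begins with 1,
  and the largest label otherwise. Hanging an S-avoiding forest on a p-set A below r and
  placing an S-avoiding forest on the remaining q vertices beside this tree creates no
  instance: an instance through r must start at r, so its pattern would begin with 1
  (resp. with its largest element). Hence binom(p+q, p) a_p a_q <= a_(p+q+1), and in the
  same way a_n <= t_(n+1), while t_n <= a_n trivially. For h_n = ln (a_n / n!) this reads
  h_p + h_q - ln (p+q+1) <= h_(p+q+1), a superadditivity with logarithmic defect; a
  doubling argument in the spirit of Fekete's lemma shows that h_n / n converges. Since
  ln (n!) / n - ln n tends to -1, a_n^(1/n) / n converges, and the sandwich
  t_n <= a_n <= t_(n+1) gives the same limit for trees. *)

section \<open>Pattern-avoiding forests on arbitrary vertex sets\<close>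

definition forest_on :: "nat set \<Rightarrow> (nat \<Rightarrow> nat option) \<Rightarrow> bool" where
  "forest_on V par \<longleftrightarrow>
     (\<forall>v. v \<notin> V \<longrightarrow> par v = None) \<and>
     (\<forall>v u. par v = Some u \<longrightarrow> u \<in> V) \<and>
     acyclic (parent_rel par)"

definition instance_on :: "nat set \<Rightarrow> (nat \<Rightarrow> nat option) \<Rightarrow> nat list \<Rightarrow> nat list \<Rightarrow> bool" where
  "instance_on V par pat vs \<longleftrightarrow>
     length vs = length pat \<and> set vs \<subseteq> V \<and>
     (\<forall>i. i + 1 < length vs \<longrightarrow> strict_anc par (vs ! i) (vs ! (i + 1))) \<and>
     (\<forall>i j. i < length vs \<longrightarrow> j < length vs \<longrightarrow> (vs ! i < vs ! j \<longleftrightarrow> pat ! i < pat ! j))"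

definition avoiding_forests :: "nat list set \<Rightarrow> nat set \<Rightarrow> (nat \<Rightarrow> nat option) set" where
  "avoiding_forests S V = {par. forest_on V par \<and> (\<forall>pat \<in> S. \<forall>vs. \<not> instance_on V par pat vs)}"

lemma f_count_eq_card_avoiding_forests: "f_count S n = card (avoiding_forests S {1..n})"
  unfolding f_count_def avoiding_forests_def is_forest_def forest_on_def avoids_def
    is_instance_def instance_on_def ..

lemma t_count_eq_card_avoiding_trees:
  "t_count S n = card {par \<in> avoiding_forests S {1..n}. card {v \<in> {1..n}. par v = None} = 1}"
  unfolding t_count_def avoiding_forests_def is_tree_def is_forest_def forest_on_def avoids_def
    is_instance_def instance_on_def by (intro arg_cong[where f = card] Collect_cong) blast

lemma avoiding_forestsI:
  "forest_on V par \<Longrightarrow> (\<And>pat vs. pat \<in> S \<Longrightarrow> \<not> instance_on V par pat vs) \<Longrightarrow>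
    par \<in> avoiding_forests S V"
  unfolding avoiding_forests_def by blast

lemma avoiding_forests_outside: "par \<in> avoiding_forests S V \<Longrightarrow> v \<notin> V \<Longrightarrow> par v = None"
  unfolding avoiding_forests_def forest_on_def by blast

lemma avoiding_forests_parent_in: "par \<in> avoiding_forests S V \<Longrightarrow> par v = Some u \<Longrightarrow> u \<in> V"
  unfolding avoiding_forests_def forest_on_def by blast

lemma avoiding_forests_no_instance:
  "par \<in> avoiding_forests S V \<Longrightarrow> pat \<in> S \<Longrightarrow> \<not> instance_on V par pat vs"
  unfolding avoiding_forests_def by blast

lemma parent_rel_subset: "forest_on V par \<Longrightarrow> parent_rel par \<subseteq> V \<times> V"
  unfolding forest_on_def parent_rel_def by auto

lemma empty_forest_avoiding:
  assumes "\<forall>pat \<in> S. is_pattern pat"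
  shows "(\<lambda>_. None) \<in> avoiding_forests S {}"
  using assms
  by (auto simp: avoiding_forests_def forest_on_def parent_rel_def acyclic_def instance_on_def
      is_pattern_def)

lemma
  assumes "finite V"
  shows finite_avoiding_forests: "finite (avoiding_forests S V)"
    and card_avoiding_forests_le: "card (avoiding_forests S V) \<le> (card V + 1) ^ card V"
proof -
  let ?restr = "\<lambda>par. restrict par V" and ?P = "\<Pi>\<^sub>E v \<in> V. insert None (Some ` V)"
  have inj: "inj_on ?restr (avoiding_forests S V)"
  proof (rule inj_onI, rule ext)
    fix par par' v
    assume "par \<in> avoiding_forests S V" "par' \<in> avoiding_forests S V" "?restr par = ?restr par'"
    then show "par v = par' v"
      by (cases "v \<in> V") (metis restrict_apply', simp add: avoiding_forests_outside)
  qed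
  have "par v \<in> insert None (Some ` V)" if "par \<in> avoiding_forests S V" for par v
    using avoiding_forests_parent_in[OF that] by (cases "par v") auto
  then have sub: "?restr ` avoiding_forests S V \<subseteq> ?P"
    unfolding image_subset_iff restrict_PiE_iff by blast
  have fin: "finite ?P"
    using assms by (intro finite_PiE) auto
  show "finite (avoiding_forests S V)"
    using finite_imageD[OF finite_subset[OF sub fin] inj] .
  have "card (avoiding_forests S V) \<le> card ?P"
    using card_mono[OF fin sub] card_image[OF inj] by simp
  also have "\<dots> = (card V + 1) ^ card V"
    using assms by (simp add: card_PiE card_image)
  finally show "card (avoiding_forests S V) \<le> (card V + 1) ^ card V" .
qed

section \<open>Relabelling along order embeddings\<close>

lemma trancl_map_prod_inj_on:
  assumes inj: "inj_on f (Field R)" and pq: "(p, q) \<in> (map_prod f f ` R)\<^sup>+"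
  obtains a b where "p = f a" "q = f b" "(a, b) \<in> R\<^sup>+"
proof -
  from pq have "\<exists>a b. p = f a \<and> q = f b \<and> (a, b) \<in> R\<^sup>+"
  proof (induction rule: trancl_induct)
    case (base y)
    then show ?case by fastforce
  next
    case (step y z)
    then obtain a b c d where "p = f a" "y = f b" "(a, b) \<in> R\<^sup>+" "(c, d) \<in> R" "y = f c" "z = f d"
      by auto
    moreover have "b \<in> Field R" "c \<in> Field R"
      using calculation by (auto simp: Field_def dest: tranclD2)
    ultimately have "b = c"
      using inj by (metis inj_onD)
    with \<open>(a, b) \<in> R\<^sup>+\<close> \<open>(c, d) \<in> R\<close> have "(a, d) \<in> R\<^sup>+"
      by (meson trancl_into_trancl)
    with \<open>p = f a\<close> \<open>z = f d\<close> show ?case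
      by blast
  qed
  then show ?thesis
    using that by blast
qed

definition relabel :: "(nat \<Rightarrow> nat) \<Rightarrow> nat set \<Rightarrow> (nat \<Rightarrow> nat option) \<Rightarrow> nat \<Rightarrow> nat option" where
  "relabel \<sigma> V par = (\<lambda>w. if w \<in> \<sigma> ` V then map_option \<sigma> (par (inv_into V \<sigma> w)) else None)"

lemma parent_rel_relabel:
  assumes "forest_on V par" "inj_on \<sigma> V"
  shows "parent_rel (relabel \<sigma> V par) = map_prod \<sigma> \<sigma> ` parent_rel par"
proof (intro set_eqI iffI)
  fix e assume "e \<in> parent_rel (relabel \<sigma> V par)"
  then obtain v u where "e = (\<sigma> v, \<sigma> u)" "v \<in> V" "par v = Some u"
    using assms(2) by (auto simp: parent_rel_def relabel_def split: if_splits)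
  then show "e \<in> map_prod \<sigma> \<sigma> ` parent_rel par"
    by (auto simp: parent_rel_def)
next
  fix e assume "e \<in> map_prod \<sigma> \<sigma> ` parent_rel par"
  then obtain v u where e: "e = (\<sigma> v, \<sigma> u)" and vu: "par v = Some u"
    by (auto simp: parent_rel_def)
  have "v \<in> V"
    using assms(1) vu by (auto simp: forest_on_def)
  then have "\<sigma> v \<in> \<sigma> ` V" "inv_into V \<sigma> (\<sigma> v) = v"
    using assms(2) by (simp_all add: inv_into_f_f)
  then show "e \<in> parent_rel (relabel \<sigma> V par)"
    using e vu by (simp add: parent_rel_def relabel_def)
qed

lemma trancl_parent_rel_relabel:
  assumes "forest_on V par" "inj_on \<sigma> V" "(p, q) \<in> (parent_rel (relabel \<sigma> V par))\<^sup>+"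
  obtains a b where "a \<in> V" "b \<in> V" "p = \<sigma> a" "q = \<sigma> b" "(a, b) \<in> (parent_rel par)\<^sup>+"
proof -
  have field: "Field (parent_rel par) \<subseteq> V"
    using parent_rel_subset[OF assms(1)] by (auto simp: Field_def)
  obtain a b where ab: "p = \<sigma> a" "q = \<sigma> b" "(a, b) \<in> (parent_rel par)\<^sup>+"
    using trancl_map_prod_inj_on[OF inj_on_subset[OF assms(2) field]] assms(3)
    unfolding parent_rel_relabel[OF assms(1,2)] by metis
  moreover have "a \<in> V" "b \<in> V"
    using ab(3) field by (auto simp: Field_def dest: tranclD tranclD2)
  ultimately show ?thesis
    using that by blast
qed

lemma strict_anc_relabelD:
  assumes "forest_on V par" "inj_on \<sigma> V" "x \<in> V" "y \<in> V"
    and "strict_anc (relabel \<sigma> V par) (\<sigma> x) (\<sigma> y)"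
  shows "strict_anc par x y"
  using trancl_parent_rel_relabel[OF assms(1,2), of "\<sigma> y" "\<sigma> x"] assms(2-5)
  by (auto simp: strict_anc_def inj_on_eq_iff)

lemma forest_on_relabel:
  assumes forest: "forest_on V par" and inj: "inj_on \<sigma> V"
  shows "forest_on (\<sigma> ` V) (relabel \<sigma> V par)"
  unfolding forest_on_def
proof (intro conjI allI impI)
  show "relabel \<sigma> V par v = None" if "v \<notin> \<sigma> ` V" for v
    using that by (simp add: relabel_def)
  show "u \<in> \<sigma> ` V" if "relabel \<sigma> V par v = Some u" for v u
    using that forest by (auto simp: relabel_def forest_on_def split: if_splits)
  show "acyclic (parent_rel (relabel \<sigma> V par))"
    unfolding acyclic_def
  proof (intro allI notI)
    fix x assume "(x, x) \<in> (parent_rel (relabel \<sigma> V par))\<^sup>+"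
    then obtain a b where "a \<in> V" "b \<in> V" "\<sigma> a = \<sigma> b" "(a, b) \<in> (parent_rel par)\<^sup>+"
      using trancl_parent_rel_relabel[OF forest inj] by metis
    then show False
      using forest inj by (auto simp: forest_on_def acyclic_def inj_on_eq_iff)
  qed
qed

lemma instance_on_relabelD:
  assumes mono: "strict_mono_on V \<sigma>" and forest: "forest_on V par"
    and inst: "instance_on (\<sigma> ` V) (relabel \<sigma> V par) pat ws"
  shows "instance_on V par pat (map (inv_into V \<sigma>) ws)"
proof -
  define vs where "vs = map (inv_into V \<sigma>) ws"
  have inj: "inj_on \<sigma> V"
    using mono by (rule strict_mono_on_imp_inj_on)
  have ws: "set ws \<subseteq> \<sigma> ` V" "length ws = length pat"
    using inst by (auto simp: instance_on_def)
  have len: "length vs = length ws"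
    by (simp add: vs_def)
  have vs: "vs ! i \<in> V" "ws ! i = \<sigma> (vs ! i)" if "i < length vs" for i
  proof -
    have "ws ! i \<in> \<sigma> ` V"
      using that len ws(1) nth_mem[of i ws] by auto
    then show "vs ! i \<in> V" "ws ! i = \<sigma> (vs ! i)"
      using that len by (simp_all add: vs_def inv_into_into f_inv_into_f)
  qed
  have "instance_on V par pat vs"
    unfolding instance_on_def
  proof (intro conjI allI impI)
    show "length vs = length pat"
      using len ws(2) by simp
    show "set vs \<subseteq> V"
      using vs(1) by (auto simp: in_set_conv_nth)
    show "strict_anc par (vs ! i) (vs ! (i + 1))" if "i + 1 < length vs" for i
    proof -
      have "strict_anc (relabel \<sigma> V par) (ws ! i) (ws ! (i + 1))"
        using inst that len by (simp add: instance_on_def)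
      then show ?thesis
        using that vs strict_anc_relabelD[OF forest inj] by simp
    qed
    show "vs ! i < vs ! j \<longleftrightarrow> pat ! i < pat ! j" if "i < length vs" "j < length vs" for i j
    proof -
      have "ws ! i < ws ! j \<longleftrightarrow> pat ! i < pat ! j"
        using inst that len by (simp add: instance_on_def)
      then show ?thesis
        using that vs strict_mono_on_less[OF mono] by simp
    qed
  qed
  then show ?thesis
    by (simp add: vs_def)
qed

lemma relabel_avoiding_forests:
  assumes mono: "strict_mono_on V \<sigma>" and par: "par \<in> avoiding_forests S V"
  shows "relabel \<sigma> V par \<in> avoiding_forests S (\<sigma> ` V)"
proof (rule avoiding_forestsI)
  have forest: "forest_on V par"
    using par by (simp add: avoiding_forests_def)
  then show "forest_on (\<sigma> ` V) (relabel \<sigma> V par)"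
    using strict_mono_on_imp_inj_on[OF mono] by (rule forest_on_relabel)
  show "\<not> instance_on (\<sigma> ` V) (relabel \<sigma> V par) pat ws" if "pat \<in> S" for pat ws
    using instance_on_relabelD[OF mono forest] avoiding_forests_no_instance[OF par that] by blast
qed

lemma inj_on_relabel:
  assumes "inj_on \<sigma> V"
  shows "inj_on (relabel \<sigma> V) (avoiding_forests S V)"
proof (rule inj_onI, rule ext)
  fix par par' v
  assume par: "par \<in> avoiding_forests S V" and par': "par' \<in> avoiding_forests S V"
    and eq: "relabel \<sigma> V par = relabel \<sigma> V par'"
  show "par v = par' v"
  proof (cases "v \<in> V")
    case True
    then have "map_option \<sigma> (par v) = map_option \<sigma> (par' v)"
      using fun_cong[OF eq, of "\<sigma> v"] assms by (simp add: relabel_def inv_into_f_f)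
    moreover have "set_option (par v) \<union> set_option (par' v) \<subseteq> V"
      using avoiding_forests_parent_in[OF par] avoiding_forests_parent_in[OF par'] by blast
    ultimately show ?thesis
      using assms by (cases "par v"; cases "par' v") (auto simp: inj_on_eq_iff)
  next
    case False
    then show ?thesis
      using avoiding_forests_outside[OF par] avoiding_forests_outside[OF par'] by simp
  qed
qed

lemma card_avoiding_forests_le_image:
  assumes "strict_mono_on V \<sigma>" "finite V"
  shows "card (avoiding_forests S V) \<le> card (avoiding_forests S (\<sigma> ` V))"
proof -
  have "card (avoiding_forests S V) = card (relabel \<sigma> V ` avoiding_forests S V)"
    using inj_on_relabel[OF strict_mono_on_imp_inj_on[OF assms(1)]] by (simp add: card_image)
  also have "\<dots> \<le> card (avoiding_forests S (\<sigma> ` V))"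
    using relabel_avoiding_forests[OF assms(1)] finite_avoiding_forests[of "\<sigma> ` V"] assms(2)
    by (intro card_mono) auto
  finally show ?thesis .
qed

lemma strict_mono_on_inv_into:
  fixes \<sigma> :: "'a::linorder \<Rightarrow> 'b::linorder"
  assumes "strict_mono_on V \<sigma>"
  shows "strict_mono_on (\<sigma> ` V) (inv_into V \<sigma>)"
  using assms strict_mono_on_imp_inj_on[OF assms]
  by (auto intro!: strict_mono_onI simp: strict_mono_on_less)

lemma card_avoiding_forests_image:
  assumes "strict_mono_on V \<sigma>" "finite V"
  shows "card (avoiding_forests S (\<sigma> ` V)) = card (avoiding_forests S V)"
proof (rule antisym)
  have "inv_into V \<sigma> ` \<sigma> ` V = V"
    using strict_mono_on_imp_inj_on[OF assms(1)] by simp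
  then show "card (avoiding_forests S (\<sigma> ` V)) \<le> card (avoiding_forests S V)"
    using card_avoiding_forests_le_image[OF strict_mono_on_inv_into[OF assms(1)]] assms(2)
    by (metis finite_imageI)
qed (rule card_avoiding_forests_le_image[OF assms])

lemma card_avoiding_forests_eq_f_count:
  assumes "finite V"
  shows "card (avoiding_forests S V) = f_count S (card V)"
proof -
  obtain xs where xs: "sorted_wrt (<) xs" "set xs = V" "length xs = card V"
    using finite_set_strict_sorted[OF assms] by metis
  have "card (avoiding_forests S V) = card (avoiding_forests S ((!) xs ` {..<card V}))"
    using xs by (simp add: nth_image lessThan_atLeast0)
  also have "\<dots> = card (avoiding_forests S {..<card V})"
    using xs sorted_wrt_nth_less[OF xs(1)]
    by (intro card_avoiding_forests_image) (auto intro!: strict_mono_onI)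
  also have "\<dots> = card (avoiding_forests S (Suc ` {..<card V}))"
    by (intro card_avoiding_forests_image[symmetric]) (auto intro: strict_mono_onI)
  also have "Suc ` {..<card V} = {1..card V}"
    by (simp add: lessThan_atLeast0 atLeast0LessThan[symmetric] image_Suc_atLeastLessThan
        atLeastLessThanSuc_atLeastAtMost)
  finally show ?thesis
    by (simp add: f_count_eq_card_avoiding_forests)
qed

section \<open>Grafting below an extreme root\<close>

lemma hd_pattern_eq_1:
  assumes "is_pattern pat" and first_min: "\<And>j. 0 < j \<Longrightarrow> j < length pat \<Longrightarrow> pat ! 0 < pat ! j"
  shows "hd pat = 1"
proof -
  have set: "set pat = {1..length pat}" and "1 \<le> length pat"
    using assms(1) by (auto simp: is_pattern_def)
  then have "1 \<in> set pat" and ne: "pat \<noteq> []"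
    by auto
  then obtain i where i: "i < length pat" "pat ! i = 1"
    by (auto simp: in_set_conv_nth)
  have "1 \<le> pat ! 0"
    using set ne nth_mem[of 0 pat] by auto
  then have "i = 0"
    using first_min[of i] i by (cases "i = 0") auto
  then show ?thesis
    using i ne by (simp add: hd_conv_nth)
qed

lemma hd_pattern_eq_length:
  assumes "is_pattern pat" and first_max: "\<And>j. 0 < j \<Longrightarrow> j < length pat \<Longrightarrow> pat ! j < pat ! 0"
  shows "hd pat = length pat"
proof -
  have set: "set pat = {1..length pat}" and "1 \<le> length pat"
    using assms(1) by (auto simp: is_pattern_def)
  then have "length pat \<in> set pat" and ne: "pat \<noteq> []"
    by auto
  then obtain i where i: "i < length pat" "pat ! i = length pat"
    by (auto simp: in_set_conv_nth)
  have "pat ! 0 \<le> length pat"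
    using set ne nth_mem[of 0 pat] by auto
  then have "i = 0"
    using first_max[of i] i by (cases "i = 0") auto
  then show ?thesis
    using i ne by (simp add: hd_conv_nth)
qed

definition extreme_root :: "nat list set \<Rightarrow> nat set \<Rightarrow> nat \<Rightarrow> bool" where
  "extreme_root S U r \<longleftrightarrow> r \<in> U \<and>
     ((\<forall>pat \<in> S. hd pat \<noteq> 1) \<and> (\<forall>v \<in> U. r \<le> v) \<or>
      (\<forall>pat \<in> S. hd pat \<noteq> length pat) \<and> (\<forall>v \<in> U. v \<le> r))"

lemma no_pattern_starts_at_extreme_root:
  assumes "extreme_root S U r" "\<forall>pat \<in> S. is_pattern pat" "pat \<in> S"
    and len: "length vs = length pat" and first: "vs ! 0 = r" and "set vs \<subseteq> U"
    and rest: "\<And>j. 0 < j \<Longrightarrow> j < length vs \<Longrightarrow> vs ! j \<noteq> r"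
    and order: "\<forall>i j. i < length vs \<longrightarrow> j < length vs \<longrightarrow> (vs ! i < vs ! j \<longleftrightarrow> pat ! i < pat ! j)"
  shows False
proof -
  have pattern: "is_pattern pat"
    using assms(2,3) by blast
  have in_U: "vs ! j \<in> U" if "j < length vs" for j
    using assms(6) that by auto
  from assms(1) consider "\<forall>pat \<in> S. hd pat \<noteq> 1" "\<forall>v \<in> U. r \<le> v"
    | "\<forall>pat \<in> S. hd pat \<noteq> length pat" "\<forall>v \<in> U. v \<le> r"
    unfolding extreme_root_def by blast
  then show False
  proof cases
    case 1
    have "pat ! 0 < pat ! j" if "0 < j" "j < length pat" for j
      using 1(2) in_U[of j] rest[of j] order that len first by force
    then show False
      using hd_pattern_eq_1[OF pattern] 1(1) assms(3) by blast
  next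
    case 2
    have "pat ! j < pat ! 0" if "0 < j" "j < length pat" for j
      using 2(2) in_U[of j] rest[of j] order that len first by force
    then show False
      using hd_pattern_eq_length[OF pattern] 2(1) assms(3) by blast
  qed
qed

definition graft :: "nat \<Rightarrow> nat set \<Rightarrow> (nat \<Rightarrow> nat option) \<Rightarrow> (nat \<Rightarrow> nat option) \<Rightarrow> nat \<Rightarrow> nat option" where
  "graft r A F1 F2 = (\<lambda>v. if v \<in> A then Some (case F1 v of None \<Rightarrow> r | Some u \<Rightarrow> u) else F2 v)"

lemma instance_on_subforest:
  assumes inst: "instance_on U G pat vs" and first: "vs ! 0 \<in> X"
    and below: "\<And>x y. (x, y) \<in> (parent_rel G)\<^sup>+ \<Longrightarrow> y \<in> X \<Longrightarrow> x \<in> X \<and> (x, y) \<in> (parent_rel F)\<^sup>+"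
  shows "instance_on X F pat vs"
proof -
  have chain: "(vs ! (i + 1), vs ! i) \<in> (parent_rel G)\<^sup>+" if "i + 1 < length vs" for i
    using inst that by (simp add: instance_on_def strict_anc_def)
  have in_X: "vs ! i \<in> X" if "i < length vs" for i
    using that
  proof (induction i)
    case (Suc i)
    then show ?case
      using below chain[of i] by simp
  qed (use first in simp)
  have "strict_anc F (vs ! i) (vs ! (i + 1))" if "i + 1 < length vs" for i
    using below[OF chain] in_X that by (simp add: strict_anc_def)
  moreover have "set vs \<subseteq> X"
    using in_X by (auto simp: in_set_conv_nth)
  ultimately show ?thesis
    using inst by (simp add: instance_on_def)
qed

locale graft_setting =
  fixes S :: "nat list set" and U A B :: "nat set" and r :: nat and F1 F2 :: "nat \<Rightarrow> nat option"
  assumes patterns: "\<forall>pat \<in> S. is_pattern pat"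
    and root: "extreme_root S U r"
    and disjoint: "A \<inter> B = {}" and partition: "A \<union> B = U - {r}"
    and F1: "F1 \<in> avoiding_forests S A" and F2: "F2 \<in> avoiding_forests S B"
begin

abbreviation "G \<equiv> graft r A F1 F2"

lemma root_notin: "r \<notin> A" "r \<notin> B"
  using partition by auto

lemma graft_root: "G r = None"
  using root_notin avoiding_forests_outside[OF F2] by (simp add: graft_def)

lemma trancl_graft:
  assumes "(x, y) \<in> (parent_rel G)\<^sup>+"
  shows "x \<in> B \<and> y \<in> B \<and> (x, y) \<in> (parent_rel F2)\<^sup>+ \<or> x \<in> A \<and> y = r \<or>
         x \<in> A \<and> y \<in> A \<and> (x, y) \<in> (parent_rel F1)\<^sup>+"
  using assms
proof (induction rule: trancl_induct)
  case (base y)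
  then have edge: "G x = Some y"
    by (simp add: parent_rel_def)
  show ?case
  proof (cases "x \<in> A")
    case True
    then show ?thesis
      using edge avoiding_forests_parent_in[OF F1]
      by (cases "F1 x") (auto simp: graft_def parent_rel_def)
  next
    case False
    then have "F2 x = Some y"
      using edge by (simp add: graft_def)
    moreover have "x \<in> B"
      using avoiding_forests_outside[OF F2] calculation by fastforce
    ultimately show ?thesis
      using avoiding_forests_parent_in[OF F2] by (auto simp: parent_rel_def)
  qed
next
  case (step y z)
  then have edge: "G y = Some z"
    by (simp add: parent_rel_def)
  from step.IH show ?case
  proof (elim disjE conjE)
    assume "x \<in> B" "y \<in> B" "(x, y) \<in> (parent_rel F2)\<^sup>+"
    moreover have "y \<notin> A"
      using \<open>y \<in> B\<close> disjoint by blast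
    then have "F2 y = Some z"
      using edge by (simp add: graft_def)
    ultimately show ?thesis
      using avoiding_forests_parent_in[OF F2] by (auto simp: parent_rel_def intro: trancl_into_trancl)
  next
    assume "x \<in> A" "y = r"
    then show ?thesis
      using edge graft_root by simp
  next
    assume "x \<in> A" "y \<in> A" "(x, y) \<in> (parent_rel F1)\<^sup>+"
    then show ?thesis
      using edge avoiding_forests_parent_in[OF F1]
      by (cases "F1 y") (auto simp: graft_def parent_rel_def intro: trancl_into_trancl)
  qed
qed

lemma graft_forest: "forest_on U G"
  unfolding forest_on_def
proof (intro conjI allI impI)
  show "G v = None" if "v \<notin> U" for v
    using that partition avoiding_forests_outside[OF F2] by (auto simp: graft_def)
  show "u \<in> U" if "G v = Some u" for v u
    using trancl_graft[of v u] that partition root by (auto simp: parent_rel_def extreme_root_def)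
  have "acyclic (parent_rel F1)" "acyclic (parent_rel F2)"
    using F1 F2 by (simp_all add: avoiding_forests_def forest_on_def)
  then show "acyclic (parent_rel G)"
    using trancl_graft root_notin unfolding acyclic_def by blast
qed

lemma instance_on_graft_first_neq_root:
  assumes "pat \<in> S" and inst: "instance_on U G pat vs"
  shows "vs ! 0 \<noteq> r"
proof
  assume first: "vs ! 0 = r"
  have rest: "vs ! j \<noteq> r" if j: "0 < j" "j < length vs" for j
  proof -
    obtain i where "j = Suc i"
      using gr0_implies_Suc[OF j(1)] by blast
    then have "strict_anc G (vs ! i) (vs ! j)"
      using inst j by (simp add: instance_on_def)
    then have "G (vs ! j) \<noteq> None"
      by (auto simp: strict_anc_def parent_rel_def dest: tranclD)
    then show ?thesis
      using graft_root by auto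
  qed
  have "length vs = length pat" and vs_U: "set vs \<subseteq> U"
    and order: "\<forall>i j. i < length vs \<longrightarrow> j < length vs \<longrightarrow> (vs ! i < vs ! j \<longleftrightarrow> pat ! i < pat ! j)"
    using inst by (simp_all add: instance_on_def)
  then show False
    using no_pattern_starts_at_extreme_root[OF root patterns assms(1) _ first vs_U rest order] by blast
qed

lemma instance_on_graftD:
  assumes inst: "instance_on U G pat vs"
  shows "vs ! 0 \<in> A \<Longrightarrow> instance_on A F1 pat vs"
    and "vs ! 0 \<in> B \<Longrightarrow> instance_on B F2 pat vs"
proof -
  have "x \<in> A \<and> (x, y) \<in> (parent_rel F1)\<^sup>+" if "(x, y) \<in> (parent_rel G)\<^sup>+" "y \<in> A" for x y
    using trancl_graft[OF that(1)] that(2) disjoint root_notin by blast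
  then show "vs ! 0 \<in> A \<Longrightarrow> instance_on A F1 pat vs"
    using instance_on_subforest[OF inst] by blast
  have "x \<in> B \<and> (x, y) \<in> (parent_rel F2)\<^sup>+" if "(x, y) \<in> (parent_rel G)\<^sup>+" "y \<in> B" for x y
    using trancl_graft[OF that(1)] that(2) disjoint root_notin by blast
  then show "vs ! 0 \<in> B \<Longrightarrow> instance_on B F2 pat vs"
    using instance_on_subforest[OF inst] by blast
qed

lemma graft_no_instance:
  assumes "pat \<in> S"
  shows "\<not> instance_on U G pat vs"
proof
  assume inst: "instance_on U G pat vs"
  then have "0 < length vs"
    using patterns assms by (auto simp: instance_on_def is_pattern_def)
  then have "vs ! 0 \<in> set vs"
    by simp
  then have "vs ! 0 \<in> U"
    using inst by (auto simp: instance_on_def)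
  then consider "vs ! 0 = r" | "vs ! 0 \<in> A" | "vs ! 0 \<in> B"
    using partition by blast
  then show False
    using instance_on_graft_first_neq_root[OF assms inst] instance_on_graftD[OF inst]
      avoiding_forests_no_instance[OF F1 assms] avoiding_forests_no_instance[OF F2 assms]
    by cases blast+
qed

lemma graft_avoiding: "G \<in> avoiding_forests S U"
  using graft_forest graft_no_instance by (rule avoiding_forestsI)

lemma graft_roots: "{v \<in> U. G v = None} = insert r {v \<in> B. F2 v = None}"
  using partition disjoint root root_notin avoiding_forests_outside[OF F2]
  by (auto simp: graft_def extreme_root_def)

lemma below_root_graft:
  assumes "finite A"
  shows "{v. (v, r) \<in> (parent_rel G)\<^sup>+} = A"
proof
  show "{v. (v, r) \<in> (parent_rel G)\<^sup>+} \<subseteq> A"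
    using trancl_graft root_notin by blast
next
  have forest: "forest_on A F1"
    using F1 by (simp add: avoiding_forests_def)
  have "wf ((parent_rel F1)\<inverse>)"
    using forest finite_subset[OF parent_rel_subset[OF forest]] assms
    by (intro finite_acyclic_wf_converse) (auto simp: forest_on_def)
  then have "v \<in> A \<longrightarrow> (v, r) \<in> (parent_rel G)\<^sup>+" for v
  proof (induction v rule: wf_induct_rule)
    case (less v)
    show ?case
    proof
      assume "v \<in> A"
      show "(v, r) \<in> (parent_rel G)\<^sup>+"
      proof (cases "F1 v")
        case None
        then show ?thesis
          using \<open>v \<in> A\<close> by (simp add: graft_def parent_rel_def r_into_trancl')
      next
        case (Some u)
        then have "(u, r) \<in> (parent_rel G)\<^sup>+"
          using less avoiding_forests_parent_in[OF F1] by (auto simp: parent_rel_def)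
        moreover have "(v, u) \<in> parent_rel G"
          using \<open>v \<in> A\<close> Some by (simp add: graft_def parent_rel_def)
        ultimately show ?thesis
          by (meson trancl_into_trancl2)
      qed
    qed
  qed
  then show "A \<subseteq> {v. (v, r) \<in> (parent_rel G)\<^sup>+}"
    by blast
qed

end

section \<open>Counting avoiding forests and trees\<close>

lemma inj_on_graft:
  assumes "A \<inter> B = {}" "r \<notin> A"
  shows "inj_on (\<lambda>(F1, F2). graft r A F1 F2) (avoiding_forests S A \<times> avoiding_forests S B)"
proof (rule inj_onI, clarify)
  fix F1 F2 F1' F2'
  assume F: "F1 \<in> avoiding_forests S A" "F2 \<in> avoiding_forests S B"
    "F1' \<in> avoiding_forests S A" "F2' \<in> avoiding_forests S B"
    and eq: "graft r A F1 F2 = graft r A F1' F2'"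
  have "F1 v = F1' v" for v
  proof (cases "v \<in> A")
    case True
    have "F1 v \<noteq> Some r" "F1' v \<noteq> Some r"
      using avoiding_forests_parent_in[OF F(1)] avoiding_forests_parent_in[OF F(3)] assms(2) by auto
    then show ?thesis
      using fun_cong[OF eq, of v] True by (cases "F1 v"; cases "F1' v") (auto simp: graft_def)
  qed (simp add: avoiding_forests_outside[OF F(1)] avoiding_forests_outside[OF F(3)])
  moreover have "F2 v = F2' v" for v
  proof (cases "v \<in> A")
    case True
    then have "v \<notin> B"
      using assms(1) by blast
    then show ?thesis
      by (simp add: avoiding_forests_outside[OF F(2)] avoiding_forests_outside[OF F(4)])
  qed (use fun_cong[OF eq, of v] in \<open>simp add: graft_def\<close>)
  ultimately show "F1 = F1' \<and> F2 = F2'"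
    by auto
qed

lemma graft_settingI:
  assumes "\<forall>pat \<in> S. is_pattern pat" "extreme_root S U r" "A \<subseteq> U - {r}"
    and "F1 \<in> avoiding_forests S A" "F2 \<in> avoiding_forests S (U - {r} - A)"
  shows "graft_setting S U A (U - {r} - A) r F1 F2"
  using assms unfolding graft_setting_def by blast

lemma inj_on_graft_Sigma:
  assumes "\<forall>pat \<in> S. is_pattern pat" "extreme_root S U r" "finite U"
  shows "inj_on (\<lambda>(A, F1, F2). graft r A F1 F2)
    (SIGMA A:Pow (U - {r}). avoiding_forests S A \<times> avoiding_forests S (U - {r} - A))"
proof (rule inj_onI)
  fix x y
  assume "x \<in> (SIGMA A:Pow (U - {r}). avoiding_forests S A \<times> avoiding_forests S (U - {r} - A))"
    and "y \<in> (SIGMA A:Pow (U - {r}). avoiding_forests S A \<times> avoiding_forests S (U - {r} - A))"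
    and "(\<lambda>(A, F1, F2). graft r A F1 F2) x = (\<lambda>(A, F1, F2). graft r A F1 F2) y"
  moreover obtain A F1 F2 A' F1' F2' where xy: "x = (A, F1, F2)" "y = (A', F1', F2')"
    by (cases x, cases y) auto
  ultimately have eq: "graft r A F1 F2 = graft r A' F1' F2'"
    and A: "A \<subseteq> U - {r}" "F1 \<in> avoiding_forests S A" "F2 \<in> avoiding_forests S (U - {r} - A)"
    and A': "A' \<subseteq> U - {r}" "F1' \<in> avoiding_forests S A'" "F2' \<in> avoiding_forests S (U - {r} - A')"
    by auto
  have "finite A" "finite A'"
    using A(1) A'(1) \<open>finite U\<close> by (auto intro: finite_subset)
  then have "A = A'"
    using graft_setting.below_root_graft[OF graft_settingI[OF assms(1,2) A]]
      graft_setting.below_root_graft[OF graft_settingI[OF assms(1,2) A']] eq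
    by simp
  moreover have "r \<notin> A"
    using A(1) by blast
  ultimately show "x = y"
    using inj_onD[OF inj_on_graft[of A "U - {r} - A" r S]] eq xy A A' by auto
qed

lemma choose_mult_f_count_le_card_avoiding_forests:
  assumes "finite U" and patterns: "\<forall>pat \<in> S. is_pattern pat" and root: "extreme_root S U r"
  shows "(card U - 1 choose p) * f_count S p * f_count S (card U - 1 - p) \<le> card (avoiding_forests S U)"
proof -
  define U' where "U' = U - {r}"
  define X where "X = {A. A \<subseteq> U' \<and> card A = p}"
  define P where "P = (SIGMA A:X. avoiding_forests S A \<times> avoiding_forests S (U' - A))"
  let ?graft = "\<lambda>(A, F1, F2). graft r A F1 F2"
  have fin: "finite U'" "card U' = card U - 1"
    using assms(1) root by (auto simp: U'_def extreme_root_def)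
  have X: "finite A" "card A = p" "card (U' - A) = card U - 1 - p" if "A \<in> X" for A
  proof -
    show "finite A" "card A = p"
      using that fin by (auto simp: X_def intro: finite_subset)
    then show "card (U' - A) = card U - 1 - p"
      using that fin by (simp add: X_def card_Diff_subset)
  qed
  have "inj_on ?graft P"
    using inj_on_graft_Sigma[OF patterns root assms(1)] unfolding P_def X_def U'_def
    by (rule inj_on_subset) auto
  moreover have "?graft ` P \<subseteq> avoiding_forests S U"
    using graft_setting.graft_avoiding[OF graft_settingI[OF patterns root]]
    by (auto simp: P_def X_def U'_def)
  ultimately have "card P \<le> card (avoiding_forests S U)"
    using card_mono[OF finite_avoiding_forests[OF assms(1)]] card_image by metis
  moreover have "finite X"
    using fin(1) by (simp add: X_def)
  then have "card P = (\<Sum>A \<in> X. card (avoiding_forests S A \<times> avoiding_forests S (U' - A)))"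
    unfolding P_def using X(1) fin(1) by (intro card_SigmaI) (simp_all add: finite_avoiding_forests)
  also have "\<dots> = (\<Sum>A \<in> X. f_count S p * f_count S (card U - 1 - p))"
    using X fin(1)
    by (intro sum.cong) (simp_all add: card_cartesian_product card_avoiding_forests_eq_f_count)
  also have "\<dots> = (card U - 1 choose p) * (f_count S p * f_count S (card U - 1 - p))"
    using n_subsets[OF fin(1), of p] fin(2) by (simp only: X_def sum_constant of_nat_id)
  ultimately show ?thesis
    by (simp only: mult.assoc)
qed

lemma f_count_le_card_avoiding_trees:
  assumes "finite U" and patterns: "\<forall>pat \<in> S. is_pattern pat" and root: "extreme_root S U r"
  shows "f_count S (card U - 1) \<le> card {par \<in> avoiding_forests S U. card {v \<in> U. par v = None} = 1}"
proof -
  define A where "A = U - {r}"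
  let ?graft = "\<lambda>F1. graft r A F1 (\<lambda>_. None)"
  let ?trees = "{par \<in> avoiding_forests S U. card {v \<in> U. par v = None} = 1}"
  have setting: "graft_setting S U A {} r F1 (\<lambda>_. None)" if "F1 \<in> avoiding_forests S A" for F1
    using graft_settingI[OF patterns root _ that] empty_forest_avoiding[OF patterns] by (simp add: A_def)
  have "inj_on ?graft (avoiding_forests S A)"
    using inj_on_graft[of A "{}" r S] empty_forest_avoiding[OF patterns]
    by (auto simp: A_def inj_on_def)
  moreover have "?graft ` avoiding_forests S A \<subseteq> ?trees"
    using graft_setting.graft_avoiding[OF setting] graft_setting.graft_roots[OF setting] by auto
  then have "card (?graft ` avoiding_forests S A) \<le> card ?trees"
    using finite_avoiding_forests[OF assms(1)] by (intro card_mono) auto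
  ultimately have "card (avoiding_forests S A) \<le> card ?trees"
    by (simp add: card_image)
  moreover have "card A = card U - 1"
    using assms(1) root by (simp add: A_def extreme_root_def)
  ultimately show ?thesis
    using assms(1) by (simp add: A_def card_avoiding_forests_eq_f_count)
qed

context
  fixes S :: "nat list set"
  assumes patterns: "\<forall>pat \<in> S. is_pattern pat"
    and hd_condition: "(\<forall>pat \<in> S. hd pat \<noteq> 1) \<or> (\<forall>pat \<in> S. hd pat \<noteq> length pat)"
begin

lemma extreme_root_interval:
  assumes "1 \<le> n"
  obtains r where "extreme_root S {1..n} r"
proof (cases "\<forall>pat \<in> S. hd pat \<noteq> 1")
  case True
  then have "extreme_root S {1..n} 1"
    using assms by (simp add: extreme_root_def)
  then show ?thesis
    by (rule that)
next
  case False
  then have "extreme_root S {1..n} n"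
    using assms hd_condition by (auto simp: extreme_root_def)
  then show ?thesis
    by (rule that)
qed

lemma f_count_supermultiplicative: "(p + q choose p) * f_count S p * f_count S q \<le> f_count S (p + q + 1)"
proof -
  obtain r where "extreme_root S {1..p + q + 1} r"
    using extreme_root_interval[of "p + q + 1"] by auto
  from choose_mult_f_count_le_card_avoiding_forests[OF _ patterns this, of p] show ?thesis
    by (simp add: f_count_eq_card_avoiding_forests)
qed

lemma f_count_ge_1: "1 \<le> f_count S n"
proof -
  have base: "1 \<le> f_count S 0"
    using empty_forest_avoiding[OF patterns] finite_avoiding_forests[of "{}" S]
    by (auto simp: f_count_eq_card_avoiding_forests Suc_le_eq card_gt_0_iff)
  show ?thesis
  proof (induction n)
    case (Suc n)
    have "1 * 1 \<le> f_count S n * f_count S 0"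
      using Suc.IH base by (rule mult_le_mono)
    also have "\<dots> \<le> f_count S (Suc n)"
      using f_count_supermultiplicative[of n 0] by (simp only: add_0_right binomial_n_n mult_1 Suc_eq_plus1)
    finally show ?case
      by simp
  qed (rule base)
qed

lemma f_count_le: "f_count S n \<le> (n + 1) ^ n"
  using card_avoiding_forests_le[of "{1..n}" S] by (simp add: f_count_eq_card_avoiding_forests)

lemma t_count_le_f_count: "t_count S n \<le> f_count S n"
  unfolding t_count_eq_card_avoiding_trees f_count_eq_card_avoiding_forests
  by (intro card_mono finite_avoiding_forests) auto

lemma f_count_le_t_count_Suc: "f_count S n \<le> t_count S (n + 1)"
proof -
  obtain r where "extreme_root S {1..n + 1} r"
    using extreme_root_interval[of "n + 1"] by auto
  from f_count_le_card_avoiding_trees[OF _ patterns this] show ?thesis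
    by (simp add: t_count_eq_card_avoiding_trees)
qed

end

section \<open>Superadditivity with a logarithmic defect\<close>

lemma ln_superadditive_doubling:
  fixes h :: "nat \<Rightarrow> real"
  assumes sup: "\<And>p q. h p + h q - ln (real (p + q + 1)) \<le> h (p + q + 1)"
  shows "2 ^ j * (h m - ln (real m + 1) - 2) + ln (real m + 1) + real j + 2 \<le> h (2 ^ j * (m + 1) - 1)"
proof (induction j)
  case (Suc j)
  define N where "N = 2 ^ j * (m + 1) - 1"
  have pos: "1 \<le> 2 ^ j * (m + 1)"
    by (simp add: Suc_le_eq)
  then have N: "2 ^ Suc j * (m + 1) - 1 = N + N + 1" "real (N + N + 1) \<le> 2 ^ Suc j * (real m + 1)"
    by (simp_all add: N_def of_nat_diff algebra_simps)
  then have "ln (real (N + N + 1)) \<le> ln (2 ^ Suc j * (real m + 1))"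
    by simp
  also have "\<dots> = ln (2 ^ Suc j) + ln (real m + 1)"
    by (rule ln_mult_pos) auto
  also have "\<dots> = real (Suc j) * ln 2 + ln (real m + 1)"
    by (subst ln_realpow) auto
  also have "\<dots> \<le> real (Suc j) + ln (real m + 1)"
    using ln_2_less_1 by (simp add: mult_left_le)
  finally have "ln (real (N + N + 1)) \<le> real (Suc j) + ln (real m + 1)" .
  moreover have "2 ^ Suc j * (h m - ln (real m + 1) - 2) = 2 * (2 ^ j * (h m - ln (real m + 1) - 2))"
    by simp
  ultimately show ?case
    using sup[of N N] Suc.IH unfolding N(1) N_def by linarith
qed simp

lemma doubling_cases:
  fixes B :: "nat \<Rightarrow> nat"
  assumes B_Suc: "\<And>j. B (Suc j) = B j + B j + 1" and "B 0 \<le> n"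
  obtains j where "n = B j" | j s where "n = B j + s + 1" "s < B j"
proof -
  have "j \<le> B j" for j
    by (induction j) (simp_all add: B_Suc)
  from this[of n] have "n < B (Suc n)"
    using B_Suc[of n] by linarith
  then obtain j where "B j \<le> n" "n < B (Suc j)"
    using ex_least_nat_less[of "\<lambda>j. n < B j"] assms(2) by (auto simp: not_less)
  then show ?thesis
    using that(1)[of j] that(2)[of j "n - B j - 1"] B_Suc[of j] by (cases "n = B j") auto
qed

lemma lower_bound_split_step:
  fixes h :: "nat \<Rightarrow> real"
  assumes sup: "\<And>p q. h p + h q - ln (real (p + q + 1)) \<le> h (p + q + 1)"
    and anchor: "(real b + 1) * \<mu> \<le> h b" and "0 \<le> c" "0 \<le> t"
    and rest: "\<mu> * real s - t * (c + ln (real s + 1)) - K \<le> h s"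
    and n: "n = b + s + 1"
  shows "\<mu> * real n - (t + 1) * (c + ln (real n + 1)) - K \<le> h n"
proof -
  have "h b + h s - ln (real n) \<le> h n"
    using sup[of b s] n by simp
  moreover have "t * ln (real s + 1) \<le> t * ln (real n + 1)"
    using \<open>0 \<le> t\<close> n by (intro mult_left_mono) auto
  moreover have "ln (real n) \<le> ln (real n + 1)"
    using n by simp
  moreover have "\<mu> * real n = (real b + 1) * \<mu> + \<mu> * real s"
    using n by (simp add: algebra_simps)
  moreover have "(t + 1) * (c + ln (real n + 1)) = t * (c + ln (real s + 1)) + c + ln (real n + 1) + (t * ln (real n + 1) - t * ln (real s + 1))"
    by (simp add: algebra_simps)
  ultimately show ?thesis
    using anchor rest \<open>0 \<le> c\<close> by linarith
qed
(* Writing n = B j + s + 1 with B j <= n < B (j + 1) gives s < n / 2, so after at most k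
  such splittings the remainder drops below B 0; each splitting costs at most |mu| + ln (n + 1). *)
lemma lower_bound_from_anchors:
  fixes h :: "nat \<Rightarrow> real" and B :: "nat \<Rightarrow> nat"
  assumes sup: "\<And>p q. h p + h q - ln (real (p + q + 1)) \<le> h (p + q + 1)"
    and low: "\<And>n. - (real n * real n) \<le> h n"
    and anchor: "\<And>j. (real (B j) + 1) * \<mu> \<le> h (B j)"
    and B_Suc: "\<And>j. B (Suc j) = B j + B j + 1"
    and "n < 2 ^ k"
  shows "\<mu> * real n - real k * (\<bar>\<mu>\<bar> + ln (real n + 1)) - (real (B 0) ^ 2 + \<bar>\<mu>\<bar> * (real (B 0) + 1)) \<le> h n"
  using \<open>n < 2 ^ k\<close>
proof (induction n arbitrary: k rule: less_induct)
  case (less n)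
  let ?K = "real (B 0) ^ 2 + \<bar>\<mu>\<bar> * (real (B 0) + 1)"
  have ln_nonneg: "0 \<le> real k * (\<bar>\<mu>\<bar> + ln (real n + 1))"
    by simp
  consider "n < B 0" | j where "n = B j" | j s where "n = B j + s + 1" "s < B j"
    using doubling_cases[of B n, OF B_Suc] by (metis not_less)
  then show ?case
  proof cases
    case 1
    have "\<mu> * real n \<le> \<bar>\<mu>\<bar> * real n"
      by (simp add: mult_right_mono)
    also have "\<dots> \<le> \<bar>\<mu>\<bar> * (real (B 0) + 1)"
      using 1 by (simp add: mult_left_mono)
    finally have "\<mu> * real n \<le> \<bar>\<mu>\<bar> * (real (B 0) + 1)" .
    moreover have "real n * real n \<le> real (B 0) ^ 2"
      using 1 unfolding power2_eq_square by (intro mult_mono) auto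
    ultimately show ?thesis
      using low[of n] ln_nonneg by linarith
  next
    case (2 j)
    have "(real n + 1) * \<mu> \<le> h n"
      using anchor[of j] 2 by simp
    moreover have "(real n + 1) * \<mu> = \<mu> * real n + \<mu>"
      by (simp add: algebra_simps)
    moreover have "\<bar>\<mu>\<bar> \<le> ?K"
      by (simp add: mult_le_cancel_left1 add_increasing)
    ultimately show ?thesis
      using ln_nonneg abs_ge_minus_self[of \<mu>] by linarith
  next
    case (3 j s)
    then obtain k' where "k = Suc k'" "s < 2 ^ k'"
      using less.prems by (cases k) auto
    then show ?thesis
      using lower_bound_split_step[OF sup anchor[of j] abs_ge_zero of_nat_0_le_iff less.IH[of s k'] 3(1)] 3
      by (simp add: add.commute)
  qed
qed

lemma obtain_pow2_gt:
  fixes n :: nat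
  obtains k :: nat where "n < 2 ^ k" "real k \<le> log 2 (real n + 1) + 1"
proof
  define k where "k = nat \<lceil>log 2 (real n + 1)\<rceil>"
  have k: "real k = of_int \<lceil>log 2 (real n + 1)\<rceil>"
    unfolding k_def by simp
  have "2 powr log 2 (real n + 1) \<le> 2 powr real k"
    unfolding k by (intro powr_mono) simp_all
  then have "real (n + 1) \<le> real ((2 :: nat) ^ k)"
    by (simp add: powr_realpow)
  then show "n < 2 ^ k"
    by (simp only: of_nat_le_iff)
  show "real k \<le> log 2 (real n + 1) + 1"
    unfolding k by simp
qed

lemma ln_superadditive_lower_bound:
  fixes h :: "nat \<Rightarrow> real" and m :: nat
  assumes sup: "\<And>p q. h p + h q - ln (real (p + q + 1)) \<le> h (p + q + 1)"
    and low: "\<And>n. - (real n * real n) \<le> h n"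
  defines "\<mu> \<equiv> (h m - ln (real m + 1) - 2) / (real m + 1)"
  assumes "n < 2 ^ k"
  shows "\<mu> * real n - real k * (\<bar>\<mu>\<bar> + ln (real n + 1)) - (real m ^ 2 + \<bar>\<mu>\<bar> * (real m + 1)) \<le> h n"
proof -
  define B where "B j = 2 ^ j * (m + 1) - 1" for j
  have pos: "1 \<le> 2 ^ j * (m + 1)" for j :: nat
    by (simp add: Suc_le_eq)
  have B_Suc: "B (Suc j) = B j + B j + 1" for j
    using pos[of j] by (simp add: B_def)
  have "real (B j) + 1 = 2 ^ j * (real m + 1)" for j
    using pos[of j] by (simp add: B_def of_nat_diff algebra_simps)
  then have scaled: "(real (B j) + 1) * \<mu> = 2 ^ j * (h m - ln (real m + 1) - 2)" for j
    by (simp add: \<mu>_def add_pos_nonneg)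
  have anchor: "(real (B j) + 1) * \<mu> \<le> h (B j)" for j
  proof -
    have "0 \<le> ln (real m + 1) + real j + 2"
      by simp
    then show ?thesis
      using ln_superadditive_doubling[OF sup, of j m] scaled[of j] unfolding B_def by linarith
  qed
  show ?thesis
    using lower_bound_from_anchors[of h B \<mu>, OF sup low anchor B_Suc \<open>n < 2 ^ k\<close>] by (simp add: B_def)
qed

lemma ln_superadditive_eventually_gt:
  fixes h :: "nat \<Rightarrow> real"
  assumes sup: "\<And>p q. h p + h q - ln (real (p + q + 1)) \<le> h (p + q + 1)"
    and low: "\<And>n. - (real n * real n) \<le> h n"
    and "0 < e"
  shows "\<forall>\<^sub>F n in sequentially. (h m - ln (real m + 1) - 2) / (real m + 1) - e < h n / real n"
proof -
  define \<mu> where "\<mu> = (h m - ln (real m + 1) - 2) / (real m + 1)"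
  define K where "K = real m ^ 2 + \<bar>\<mu>\<bar> * (real m + 1)"
  define E where "E n = ((ln (real n + 1) / ln 2 + 1) * (\<bar>\<mu>\<bar> + ln (real n + 1)) + K) / real n" for n :: nat
  have "E \<longlonglongrightarrow> 0"
    unfolding E_def by real_asymp
  then have "\<forall>\<^sub>F n in sequentially. E n < e"
    using \<open>0 < e\<close> by (simp add: order_tendsto_iff)
  then show ?thesis
    unfolding \<mu>_def[symmetric] using eventually_gt_at_top[of 0]
  proof eventually_elim
    case (elim n)
    obtain k where k: "n < 2 ^ k" "real k \<le> log 2 (real n + 1) + 1"
      by (rule obtain_pow2_gt)
    have "real k * (\<bar>\<mu>\<bar> + ln (real n + 1)) \<le> (ln (real n + 1) / ln 2 + 1) * (\<bar>\<mu>\<bar> + ln (real n + 1))"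
      using k(2) by (intro mult_right_mono) (simp_all add: log_def)
    then have "\<mu> * real n - E n * real n \<le> h n"
      using ln_superadditive_lower_bound[OF sup low k(1), of m] elim by (simp add: E_def K_def \<mu>_def)
    moreover have "E n * real n < e * real n"
      using elim by simp
    ultimately have "(\<mu> - e) * real n < h n"
      by (simp add: left_diff_distrib)
    then show ?case
      using elim by (simp add: field_simps)
  qed
qed

lemma div_le_div_Suc_plus:
  fixes x :: real
  assumes "x \<le> real n + 1" "0 < n"
  shows "x / real n \<le> x / (real n + 1) + 1 / real n"
proof -
  have "x / real n - x / (real n + 1) = x / (real n * (real n + 1))"
    using assms(2) by (simp add: divide_simps) (simp add: algebra_simps)
  also have "\<dots> \<le> (real n + 1) / (real n * (real n + 1))"
    using assms by (intro divide_right_mono) auto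
  finally show ?thesis
    using assms(2) by simp
qed

lemma convergent_div_if_ln_superadditive:
  fixes h :: "nat \<Rightarrow> real"
  assumes sup: "\<And>p q. h p + h q - ln (real (p + q + 1)) \<le> h (p + q + 1)"
    and up: "\<And>n. h n \<le> real n + 1"
    and low: "\<And>n. - (real n * real n) \<le> h n"
  shows "convergent (\<lambda>n. h n / real n)"
proof -
  define c where "c m = (h m - ln (real m + 1) - 2) / (real m + 1)" for m
  have "c m \<le> 1" for m
  proof -
    have "0 \<le> ln (real m + 1)"
      by simp
    then have "h m - ln (real m + 1) - 2 \<le> real m + 1"
      using up[of m] by linarith
    then show ?thesis
      by (simp add: c_def divide_le_eq_1 add_nonneg_pos)
  qed
  then have bdd: "bdd_above (range c)"
    by (intro bdd_aboveI[of _ 1]) auto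
  have "(\<lambda>n. h n / real n) \<longlonglongrightarrow> (SUP m. c m)"
  proof (rule order_tendstoI)
    fix a
    assume "a < (SUP m. c m)"
    then obtain m where "a < c m"
      using less_cSUP_iff[OF _ bdd] by auto
    then show "\<forall>\<^sub>F n in sequentially. a < h n / real n"
      using ln_superadditive_eventually_gt[OF sup low, of "c m - a" m] by (simp add: c_def)
  next
    fix a
    assume "(SUP m. c m) < a"
    moreover have "(\<lambda>n. 1 / real n + (ln (real n + 1) + 2) / (real n + 1)) \<longlonglongrightarrow> 0"
      by real_asymp
    ultimately have "\<forall>\<^sub>F n in sequentially. 1 / real n + (ln (real n + 1) + 2) / (real n + 1) < a - (SUP m. c m)"
      by (simp add: order_tendsto_iff)
    then show "\<forall>\<^sub>F n in sequentially. h n / real n < a"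
      using eventually_gt_at_top[of 0]
    proof eventually_elim
      case (elim n)
      moreover have "c n \<le> (SUP m. c m)"
        using bdd by (simp add: cSUP_upper)
      moreover have "c n = h n / (real n + 1) - (ln (real n + 1) + 2) / (real n + 1)"
        by (simp add: c_def diff_divide_distrib add_divide_distrib)
      ultimately show ?case
        using div_le_div_Suc_plus[OF up, of n] by linarith
    qed
  qed
  then show ?thesis
    by (rule convergentI)
qed

section \<open>Factorials and roots\<close>

lemma Suc_power_le_exp_mult_power: "(real n + 1) ^ n \<le> exp 1 * real n ^ n"
proof (cases "n = 0")
  case False
  then have "real n + 1 \<le> real n * exp (1 / real n)"
    using exp_ge_add_one_self[of "1 / real n"] by (simp add: field_simps)
  then have "(real n + 1) ^ n \<le> (real n * exp (1 / real n)) ^ n"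
    by (intro power_mono) auto
  also have "\<dots> = exp 1 * real n ^ n"
    using False by (simp add: power_mult_distrib exp_of_nat_mult[symmetric])
  finally show ?thesis .
qed simp

lemma power_le_exp_mult_fact: "real n ^ n \<le> exp (real n) * fact n"
proof (induction n)
  case (Suc n)
  have "real (Suc n) ^ Suc n = (real n + 1) * (real n + 1) ^ n"
    by (simp add: add.commute)
  also have "\<dots> \<le> (real n + 1) * (exp 1 * real n ^ n)"
    by (intro mult_left_mono Suc_power_le_exp_mult_power) auto
  also have "\<dots> \<le> (real n + 1) * (exp 1 * (exp (real n) * fact n))"
    by (intro mult_left_mono Suc.IH) auto
  also have "\<dots> = exp (real (Suc n)) * fact (Suc n)"
    by (simp add: exp_add algebra_simps)
  finally show ?case .
qed simp

lemma exp_mult_power_le_Suc_power: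
  assumes "1 \<le> n"
  shows "exp 1 * real n ^ (n + 1) \<le> (real n + 1) ^ (n + 1)"
proof -
  have "real n \<le> (real n + 1) * exp (- (1 / (real n + 1)))"
    using exp_ge_add_one_self[of "- (1 / (real n + 1))"] by (simp add: field_simps)
  then have base: "exp (1 / (real n + 1)) * real n \<le> real n + 1"
    by (simp add: exp_minus field_simps)
  have "exp (1 / (real n + 1)) ^ (n + 1) = exp (real (n + 1) * (1 / (real n + 1)))"
    by (rule exp_of_nat_mult[symmetric])
  then have "exp (1 / (real n + 1)) ^ (n + 1) = exp 1"
    by simp
  then have "exp 1 * real n ^ (n + 1) = (exp (1 / (real n + 1)) * real n) ^ (n + 1)"
    by (simp only: power_mult_distrib)
  also have "\<dots> \<le> (real n + 1) ^ (n + 1)"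
    using base by (intro power_mono) auto
  finally show ?thesis .
qed

lemma fact_mult_exp_le_power:
  assumes "1 \<le> n"
  shows "fact n * exp (real n - 1) \<le> real n ^ (n + 1)"
  using assms
proof (induction n rule: dec_induct)
  case (step n)
  have "fact (Suc n) * exp (real (Suc n) - 1) = (real n + 1) * (exp 1 * (fact n * exp (real n - 1)))"
    by (simp add: exp_add[symmetric] algebra_simps)
  also have "\<dots> \<le> (real n + 1) * (exp 1 * real n ^ (n + 1))"
    by (intro mult_left_mono step.IH) auto
  also have "\<dots> \<le> (real n + 1) * (real n + 1) ^ (n + 1)"
    by (intro mult_left_mono exp_mult_power_le_Suc_power step.hyps) auto
  finally show ?case
    by (simp add: add.commute)
qed simp

lemma ln_fact_div_minus_ln_tendsto: "(\<lambda>n. ln (fact n) / real n - ln (real n)) \<longlonglongrightarrow> -1"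
proof (rule real_tendsto_sandwich)
  show "\<forall>\<^sub>F n in sequentially. -1 \<le> ln (fact n) / real n - ln (real n)"
    using eventually_gt_at_top[of 0]
  proof eventually_elim
    case (elim n)
    have "ln (real n ^ n) \<le> ln (exp (real n) * fact n)"
      using power_le_exp_mult_fact[of n] elim by simp
    then have "real n * ln (real n) \<le> real n + ln (fact n)"
      using elim by (simp add: ln_realpow ln_mult)
    then show ?case
      using elim by (simp add: field_simps)
  qed
  show "\<forall>\<^sub>F n in sequentially. ln (fact n) / real n - ln (real n) \<le> -1 + (1 + ln (real n)) / real n"
    using eventually_gt_at_top[of 0]
  proof eventually_elim
    case (elim n)
    have "ln (fact n * exp (real n - 1)) \<le> ln (real n ^ (n + 1))"
      using fact_mult_exp_le_power[of n] elim by simp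
    then have "ln (fact n) - real n * ln (real n) \<le> 1 + ln (real n) - real n"
      using elim by (simp add: ln_realpow ln_mult algebra_simps)
    then have "(ln (fact n) - real n * ln (real n)) / real n \<le> (1 + ln (real n) - real n) / real n"
      by (rule divide_right_mono) simp
    then show ?case
      using elim by (simp add: diff_divide_distrib)
  qed
  show "(\<lambda>n. -1 + (1 + ln (real n)) / real n) \<longlonglongrightarrow> -1"
    by real_asymp
qed simp

lemma ln_minus_ln_fact_superadditive:
  fixes a :: "nat \<Rightarrow> nat"
  assumes pos: "\<And>n. 1 \<le> a n" and sup: "(p + q choose p) * a p * a q \<le> a (p + q + 1)"
  shows "(ln (real (a p)) - ln (fact p)) + (ln (real (a q)) - ln (fact q)) - ln (real (p + q + 1))
    \<le> ln (real (a (p + q + 1))) - ln (fact (p + q + 1))"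
proof -
  have a_pos: "0 < real (a n)" for n
    using pos[of n] by simp
  have "real (p + q choose p) * real (a p) * real (a q) \<le> real (a (p + q + 1))"
    using sup by (simp flip: of_nat_mult)
  then have "ln (real (p + q choose p)) + ln (real (a p)) + ln (real (a q)) \<le> ln (real (a (p + q + 1)))"
    using a_pos by (simp add: ln_mult flip: ln_le_cancel_iff)
  moreover have "real (p + q choose p) = fact (p + q) / (fact p * fact q)"
    using binomial_fact[of p "p + q"] by simp
  then have "ln (real (p + q choose p)) = ln (fact (p + q)) - ln (fact p) - ln (fact q)"
    by (simp add: ln_div ln_mult)
  moreover have "ln (fact (p + q + 1) :: real) = ln (real (p + q + 1)) + ln (fact (p + q))"
    by (simp add: ln_mult)
  ultimately show ?thesis
    by simp
qed

lemma ln_minus_ln_fact_le: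
  assumes "0 < x" "x \<le> (real n + 1) ^ n"
  shows "ln x - ln (fact n) \<le> real n + 1"
proof -
  have "x \<le> exp 1 * real n ^ n"
    using assms(2) Suc_power_le_exp_mult_power by (rule order.trans)
  also have "\<dots> \<le> exp 1 * (exp (real n) * fact n)"
    by (intro mult_left_mono power_le_exp_mult_fact) simp
  finally show ?thesis
    using assms(1) by (simp add: ln_mult exp_add[symmetric] flip: ln_le_cancel_iff)
qed

lemma ln_fact_le_square: "ln (fact n) \<le> real n * real n"
proof -
  have "fact n \<le> real n ^ n"
    using fact_le_power[of n] by simp
  also have "\<dots> \<le> exp (real n) ^ n"
    using exp_ge_add_one_self[of "real n"] by (intro power_mono) linarith+
  also have "\<dots> = exp (real n * real n)"
    by (simp only: exp_of_nat_mult)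
  finally have "ln (fact n) \<le> ln (exp (real n * real n))"
    by (rule ln_mono) simp
  then show ?thesis
    by simp
qed

lemma ln_div_minus_ln_convergent:
  fixes a :: "nat \<Rightarrow> nat"
  assumes pos: "\<And>n. 1 \<le> a n" and up: "\<And>n. a n \<le> (n + 1) ^ n"
    and sup: "\<And>p q. (p + q choose p) * a p * a q \<le> a (p + q + 1)"
  shows "convergent (\<lambda>n. ln (real (a n)) / real n - ln (real n))"
proof -
  define h where "h n = ln (real (a n)) - ln (fact n)" for n
  have "h p + h q - ln (real (p + q + 1)) \<le> h (p + q + 1)" for p q
    unfolding h_def using pos sup by (rule ln_minus_ln_fact_superadditive)
  moreover have "h n \<le> real n + 1" for n
  proof -
    have "real (a n) \<le> real ((n + 1) ^ n)"
      using up[of n] by (simp only: of_nat_le_iff)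
    then show ?thesis
      unfolding h_def using pos[of n] by (intro ln_minus_ln_fact_le) (simp_all add: add.commute)
  qed
  moreover have "- (real n * real n) \<le> h n" for n
  proof -
    have "0 \<le> ln (real (a n))"
      using pos[of n] by simp
    then show ?thesis
      using ln_fact_le_square[of n] unfolding h_def by linarith
  qed
  ultimately have "convergent (\<lambda>n. h n / real n)"
    by (rule convergent_div_if_ln_superadditive)
  then obtain l where "(\<lambda>n. h n / real n) \<longlonglongrightarrow> l"
    by (auto simp: convergent_def)
  then have "(\<lambda>n. h n / real n + (ln (fact n) / real n - ln (real n))) \<longlonglongrightarrow> l + -1"
    by (intro tendsto_add ln_fact_div_minus_ln_tendsto)
  then show ?thesis
    by (auto simp: convergent_def h_def diff_divide_distrib)
qed

lemma ln_div_Suc_minus_ln_Suc_tendsto: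
  assumes lim: "(\<lambda>n. ln (x n) / real n - ln (real n)) \<longlonglongrightarrow> l"
  shows "(\<lambda>n. ln (x n) / (real n + 1) - ln (real n + 1)) \<longlonglongrightarrow> l"
proof -
  have "(\<lambda>n. real n / (real n + 1) * (ln (x n) / real n - ln (real n))
      + (real n / (real n + 1) * ln (real n) - ln (real n + 1))) \<longlonglongrightarrow> 1 * l + 0"
  proof (intro tendsto_add tendsto_mult lim)
    show "(\<lambda>n. real n / (real n + 1)) \<longlonglongrightarrow> 1"
      by real_asymp
    show "(\<lambda>n. real n / (real n + 1) * ln (real n) - ln (real n + 1)) \<longlonglongrightarrow> 0"
      by real_asymp
  qed
  moreover have "\<forall>\<^sub>F n in sequentially. real n / (real n + 1) * (ln (x n) / real n - ln (real n))
      + (real n / (real n + 1) * ln (real n) - ln (real n + 1)) = ln (x n) / (real n + 1) - ln (real n + 1)"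
    using eventually_gt_at_top[of 0] by eventually_elim (simp add: right_diff_distrib)
  ultimately show ?thesis
    using Lim_transform_eventually by fastforce
qed

lemma ln_div_minus_ln_tendsto_interlaced:
  fixes a b :: "nat \<Rightarrow> nat"
  assumes lim: "(\<lambda>n. ln (real (a n)) / real n - ln (real n)) \<longlonglongrightarrow> l"
    and pos: "\<And>n. 1 \<le> a n" and below: "\<And>n. b n \<le> a n" and above: "\<And>n. a n \<le> b (n + 1)"
  shows "(\<lambda>n. ln (real (b n)) / real n - ln (real n)) \<longlonglongrightarrow> l"
proof -
  have "(\<lambda>n. ln (real (b (Suc n))) / real (Suc n) - ln (real (Suc n))) \<longlonglongrightarrow> l"
  proof (rule real_tendsto_sandwich)
    show "\<forall>\<^sub>F n in sequentially. ln (real (a n)) / (real n + 1) - ln (real n + 1)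
        \<le> ln (real (b (Suc n))) / real (Suc n) - ln (real (Suc n))"
    proof (intro always_eventually allI)
      fix n
      have "ln (real (a n)) \<le> ln (real (b (Suc n)))"
        using above[of n] pos[of n] by simp
      then show "ln (real (a n)) / (real n + 1) - ln (real n + 1)
          \<le> ln (real (b (Suc n))) / real (Suc n) - ln (real (Suc n))"
        by (simp add: divide_right_mono add.commute)
    qed
    show "\<forall>\<^sub>F n in sequentially. ln (real (b (Suc n))) / real (Suc n) - ln (real (Suc n))
        \<le> ln (real (a (Suc n))) / real (Suc n) - ln (real (Suc n))"
    proof (intro always_eventually allI)
      fix n
      have "1 \<le> b (Suc n)"
        using above[of n] pos[of n] by simp
      then have "ln (real (b (Suc n))) \<le> ln (real (a (Suc n)))"
        using below[of "Suc n"] by simp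
      then show "ln (real (b (Suc n))) / real (Suc n) - ln (real (Suc n))
          \<le> ln (real (a (Suc n))) / real (Suc n) - ln (real (Suc n))"
        by (simp add: divide_right_mono)
    qed
    show "(\<lambda>n. ln (real (a (Suc n))) / real (Suc n) - ln (real (Suc n))) \<longlonglongrightarrow> l"
      using LIMSEQ_Suc[OF lim] .
  qed (rule ln_div_Suc_minus_ln_Suc_tendsto[OF lim])
  then show ?thesis
    by (rule LIMSEQ_imp_Suc)
qed

lemma root_div_tendsto_exp:
  fixes x :: "nat \<Rightarrow> real"
  assumes "(\<lambda>n. ln (x n) / real n - ln (real n)) \<longlonglongrightarrow> l" and "\<forall>\<^sub>F n in sequentially. 0 < x n"
  shows "(\<lambda>n. root n (x n) / real n) \<longlonglongrightarrow> exp l"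
proof (rule Lim_transform_eventually)
  show "(\<lambda>n. exp (ln (x n) / real n - ln (real n))) \<longlonglongrightarrow> exp l"
    using assms(1) by (rule tendsto_exp)
  show "\<forall>\<^sub>F n in sequentially. exp (ln (x n) / real n - ln (real n)) = root n (x n) / real n"
    using assms(2) eventually_gt_at_top[of 0]
    by eventually_elim (simp add: exp_diff root_powr_inverse powr_def)
qed

theorem theorem1p9:
  fixes S :: "nat list set"
  assumes "\<forall>pat \<in> S. is_pattern pat"
    and "(\<forall>pat \<in> S. hd pat \<noteq> 1) \<or> (\<forall>pat \<in> S. hd pat \<noteq> length pat)"
  shows "\<exists>L::real.
           (\<lambda>n. root n (real (f_count S n)) / real n) \<longlonglongrightarrow> L \<and>
           (\<lambda>n. root n (real (t_count S n)) / real n) \<longlonglongrightarrow> L"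
proof -
  have "convergent (\<lambda>n. ln (real (f_count S n)) / real n - ln (real n))"
    by (rule ln_div_minus_ln_convergent[OF f_count_ge_1[OF assms] f_count_le[OF assms]
          f_count_supermultiplicative[OF assms]])
  then obtain l where f: "(\<lambda>n. ln (real (f_count S n)) / real n - ln (real n)) \<longlonglongrightarrow> l"
    unfolding convergent_def by blast
  have t: "(\<lambda>n. ln (real (t_count S n)) / real n - ln (real n)) \<longlonglongrightarrow> l"
    using f f_count_ge_1[OF assms] t_count_le_f_count[OF assms] f_count_le_t_count_Suc[OF assms]
    by (rule ln_div_minus_ln_tendsto_interlaced)
  have "\<forall>\<^sub>F n in sequentially. 0 < real (f_count S n)"
    using f_count_ge_1[OF assms] by (simp add: Suc_le_eq)
  moreover have "\<forall>\<^sub>F n in sequentially. 0 < real (t_count S n)"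
    using eventually_gt_at_top[of 0]
  proof eventually_elim
    case (elim n)
    then obtain m where "n = m + 1"
      using gr0_implies_Suc by auto
    then show ?case
      using f_count_le_t_count_Suc[OF assms, of m] f_count_ge_1[OF assms, of m] by simp
  qed
  ultimately show ?thesis
    using root_div_tendsto_exp[OF f] root_div_tendsto_exp[OF t] by blast
qed

end
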